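(* For every $K^{\#}$-formula $\phi$ there exists a GNN $\mathcal{A}$ with $[[\mathcal{A}]]=[[\phi]]$ whose number of layers is $O(\mathrm{md}(\phi))$, where $\mathrm{md}(\phi)$ is the modal depth of $\phi$.
   Context: Graphs: a (labeled directed) graph is $G=(V,E,\ell)$ with $V$ finite, $E\subseteq V\times V$, and $\ell$ mapping each vertex to a truth valuation of atomic propositions; a pointed graph is $(G,u)$ with $u\in V$. GNNs: a GNN over input propositions $p_1,\dots,p_k$ is given by $L$ layers, layer $t$ specified by integer matrices $C_t,A_t\in\mathbb{Z}^{d_{t-1}\times d_t}$ and integer vector $b_t\in\mathbb{Z}^{d_t}$ ($d_0=k$), and a classifier $\mathit{cls}(x)=1$ iff $\sum_i a_ix_i\ge1$ with integer $a_i$. States: $x_0(u)=(\ell(u)(p_1),\dots,\ell(u)(p_k))$, $x_t(u)=\boldsymbol\sigma(x_{t-1}(u)C_t+(\sum_{v:(u,v)\in E}x_{t-1}(v))A_t+b_t)$ with $\sigma(z)=\max(0,\min(1,z))$ componentwise. $[[\mathcal{A}]]$ is the set of pointed graphs $(G,u)$ with $\mathit{cls}(x_L(u))=1$. Logic $K^{\#}$: formulas $\phi ::= p \mid \neg\phi \mid \phi\lor\phi \mid \xi\ge 0$, expressions $\xi ::= c \mid 1_\phi \mid \#\phi \mid \xi+\xi \mid c\times\xi$ ($c\in\mathbb{Z}$), with $[[1_\phi]]_{G,u}\in\{0,1\}$ the truth value of $\phi$ at $u$ and $[[\#\phi]]_{G,u}$ the number of successors of $u$ satisfying $\phi$; $(G,u)\models\xi\ge0$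 iff $[[\xi]]_{G,u}\ge0$; $[[\phi]]$ is the set of pointed graphs satisfying $\phi$. Modal depth: $\mathrm{md}(p)=\mathrm{md}(c)=0$, $\mathrm{md}(\neg\phi)=\mathrm{md}(1_\phi)=\mathrm{md}(\phi)$, $\mathrm{md}(\phi\lor\psi)=\max(\mathrm{md}(\phi),\mathrm{md}(\psi))$, $\mathrm{md}(\xi\ge0)=\mathrm{md}(c\times\xi)=\mathrm{md}(\xi)$, $\mathrm{md}(\#\phi)=\mathrm{md}(\phi)+1$, $\mathrm{md}(\xi_1+\xi_2)=\max(\mathrm{md}(\xi_1),\mathrm{md}(\xi_2))$. *)

theory Defs
  imports Main
begin

record 'a graph =
  verts :: "nat set"
  edges :: "(nat \<times> nat) set"
  lab   :: "nat \<Rightarrow> 'a \<Rightarrow> bool"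

definition wf_graph :: "'a graph \<Rightarrow> bool" where
  "wf_graph G \<longleftrightarrow> finite (verts G) \<and> edges G \<subseteq> verts G \<times> verts G"

definition succs :: "'a graph \<Rightarrow> nat \<Rightarrow> nat set" where
  "succs G u = {v. (u, v) \<in> edges G}"

definition pointed_graphs :: "('a graph \<times> nat) set" where
  "pointed_graphs = {(G, u). wf_graph G \<and> u \<in> verts G}"

text \<open>A GNN: input propositions p_1..p_k, dimension list d_0..d_L, layers
  (C_t, A_t, b_t) for t = 1..L (entry (i,j) of C_t is C i j with i<d_{t-1}, j<d_t),
  and classifier weights a_i (i < d_L).\<close>
record 'a gnn =
  inputs :: "'a list"
  dims   :: "nat list"
  layers :: "((nat \<Rightarrow> nat \<Rightarrow> int) \<times> (nat \<Rightarrow> nat \<Rightarrow> int) \<times> (nat \<Rightarrow> int)) list"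
  clsw   :: "nat \<Rightarrow> int"

definition wf_gnn :: "'a gnn \<Rightarrow> bool" where
  "wf_gnn N \<longleftrightarrow> length (dims N) = Suc (length (layers N)) \<and> dims N ! 0 = length (inputs N)"

definition num_layers :: "'a gnn \<Rightarrow> nat" where
  "num_layers N = length (layers N)"

definition sig :: "int \<Rightarrow> int" where
  "sig z = max 0 (min 1 z)"

fun state :: "'a gnn \<Rightarrow> 'a graph \<Rightarrow> nat \<Rightarrow> nat \<Rightarrow> nat \<Rightarrow> int" where
  "state N G 0 u = (\<lambda>i. if i < length (inputs N) then of_bool (lab G u (inputs N ! i)) else 0)"
| "state N G (Suc t) u =
     (let (C, A, b) = layers N ! t in
      (\<lambda>j. if j < dims N ! Suc t then
              sig ((\<Sum>i<dims N ! t. state N G t u i * C i j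
                     + (\<Sum>v\<in>succs G u. state N G t v i) * A i j) + b j)
           else 0))"

definition gnn_accepts :: "'a gnn \<Rightarrow> 'a graph \<Rightarrow> nat \<Rightarrow> bool" where
  "gnn_accepts N G u \<longleftrightarrow>
     (\<Sum>i<dims N ! num_layers N. clsw N i * state N G (num_layers N) u i) \<ge> 1"

definition gnn_sem :: "'a gnn \<Rightarrow> ('a graph \<times> nat) set" where
  "gnn_sem N = {(G, u). (G, u) \<in> pointed_graphs \<and> gnn_accepts N G u}"

datatype 'a fm = Prop 'a | Neg "'a fm" | Or "'a fm" "'a fm" | Ge0 "'a ex"
and 'a ex = Const int | Ind "'a fm" | Count "'a fm" | Plus "'a ex" "'a ex" | Times int "'a ex"

fun sat :: "'a graph \<Rightarrow> nat \<Rightarrow> 'a fm \<Rightarrow> bool"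
and eval :: "'a graph \<Rightarrow> nat \<Rightarrow> 'a ex \<Rightarrow> int" where
  "sat G u (Prop p) = lab G u p"
| "sat G u (Neg \<phi>) = (\<not> sat G u \<phi>)"
| "sat G u (Or \<phi> \<psi>) = (sat G u \<phi> \<or> sat G u \<psi>)"
| "sat G u (Ge0 \<xi>) = (eval G u \<xi> \<ge> 0)"
| "eval G u (Const c) = c"
| "eval G u (Ind \<phi>) = (if sat G u \<phi> then 1 else 0)"
| "eval G u (Count \<phi>) = int (card {v \<in> succs G u. sat G v \<phi>})"
| "eval G u (Plus \<xi>1 \<xi>2) = eval G u \<xi>1 + eval G u \<xi>2"
| "eval G u (Times c \<xi>) = c * eval G u \<xi>"

fun md :: "'a fm \<Rightarrow> nat" and mde :: "'a ex \<Rightarrow> nat" where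
  "md (Prop p) = 0"
| "md (Neg \<phi>) = md \<phi>"
| "md (Or \<phi> \<psi>) = max (md \<phi>) (md \<psi>)"
| "md (Ge0 \<xi>) = mde \<xi>"
| "mde (Const c) = 0"
| "mde (Ind \<phi>) = md \<phi>"
| "mde (Count \<phi>) = Suc (md \<phi>)"
| "mde (Plus \<xi>1 \<xi>2) = max (mde \<xi>1) (mde \<xi>2)"
| "mde (Times c \<xi>) = mde \<xi>"

definition fm_sem :: "'a fm \<Rightarrow> ('a graph \<times> nat) set" where
  "fm_sem \<phi> = {(G, u). (G, u) \<in> pointed_graphs \<and> sat G u \<phi>}"

end

theory Submission
  imports Defs
begin

(* Every modal level costs three layers. Suppose indicator features of the formulas one level
  down are available at every node. On integers sig (z + 1) = [z \<ge> 0], so one layer turns any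
  threshold of an affine combination of own features and successor counts into an exact 0/1
  feature; this yields the counting atoms r + \<Sum> c\<^sub>\<psi> \<cdot> #\<psi> \<ge> 0 and carries the propositions
  along. Because the count-free part of an expression is bounded, a formula of the next level is
  a Boolean function of finitely many such atoms and propositions, and two more layers compute
  any Boolean function: first the complete types (minterms), then their disjunction. Induction on
  the modal depth gives 3 md \<phi> + 3 layers. *)

type_synonym 'a node_pred = "'a graph \<Rightarrow> nat \<Rightarrow> bool"

definition succ_count :: "'a graph \<Rightarrow> nat \<Rightarrow> 'a node_pred \<Rightarrow> int" where
  "succ_count G u f = int (card {v \<in> succs G u. f G v})"

definition gnn_computes :: "nat \<Rightarrow> 'a node_pred set \<Rightarrow> bool" where
  "gnn_computes L S \<longleftrightarrow> (\<exists>(N :: 'a gnn) fs. wf_gnn N \<and> num_layers N = L \<and> dims N ! L = length fs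
     \<and> distinct fs \<and> S \<subseteq> set fs
     \<and> (\<forall>G u i. wf_graph G \<longrightarrow> i < length fs \<longrightarrow> state N G L u i = of_bool ((fs ! i) G u)))"

definition threshold_definable :: "'a node_pred set \<Rightarrow> 'a node_pred \<Rightarrow> bool" where
  "threshold_definable S g \<longleftrightarrow> (\<exists>c a b. \<forall>G u. wf_graph G \<longrightarrow>
     (g G u \<longleftrightarrow> 0 \<le> c + (\<Sum>f\<in>S. a f * of_bool (f G u) + b f * succ_count G u f)))"

definition determined_by :: "'a node_pred set \<Rightarrow> 'a node_pred \<Rightarrow> bool" where
  "determined_by S g \<longleftrightarrow> (\<forall>G H u w. wf_graph G \<longrightarrow> wf_graph H \<longrightarrow>
     (\<forall>f\<in>S. f G u = f H w) \<longrightarrow> g G u = g H w)"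

definition exact_type :: "'a node_pred set \<Rightarrow> 'a node_pred set \<Rightarrow> 'a node_pred" where
  "exact_type S A G u \<longleftrightarrow> (\<forall>f\<in>S. f G u \<longleftrightarrow> f \<in> A)"

lemma determined_byD:
  assumes "determined_by S g" "wf_graph G" "wf_graph H" "\<forall>f\<in>S. f G u = f H w"
  shows "g G u = g H w"
  using assms unfolding determined_by_def by iprover

lemma finite_succs: "wf_graph G \<Longrightarrow> finite (succs G u)"
  unfolding wf_graph_def succs_def by (rule finite_subset[of _ "verts G"]) auto

lemma sig_shift_eq_of_bool: "sig (z + 1) = of_bool (0 \<le> z)"
  unfolding sig_def by auto

lemma sum_of_bool_succs: "wf_graph G \<Longrightarrow> (\<Sum>v\<in>succs G u. of_bool (f G v)) = succ_count G u f"
  by (simp add: finite_succs Int_def succ_count_def)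

lemma sum_nth_restrict:
  assumes "distinct xs" "S \<subseteq> set xs"
  shows "(\<Sum>k<length xs. if xs ! k \<in> S then h (xs ! k) else 0) = sum h S"
proof -
  have "(\<Sum>k<length xs. if xs ! k \<in> S then h (xs ! k) else 0) = (\<Sum>x\<in>set xs. if x \<in> S then h x else 0)"
    using assms(1) by (simp add: sum.distinct_set_conv_list sum_list_sum_nth atLeast0LessThan)
  also have "\<dots> = sum h {x \<in> set xs. x \<in> S}"
    by (simp add: sum.inter_filter)
  also have "{x \<in> set xs. x \<in> S} = S"
    using assms(2) by blast
  finally show ?thesis .
qed

lemma state_eq_prefix:
  assumes "inputs N' = inputs N" "\<forall>t<T. layers N' ! t = layers N ! t" "\<forall>t\<le>T. dims N' ! t = dims N ! t"
  shows "t \<le> T \<Longrightarrow> state N' G t = state N G t"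
proof (induction t)
  case (Suc t)
  then have "state N' G t = state N G t" by simp
  with Suc.prems assms show ?case by (simp only: state.simps)
qed (simp add: fun_eq_iff assms)

lemma state_append_layer:
  fixes C A :: "nat \<Rightarrow> nat \<Rightarrow> int" and b :: "nat \<Rightarrow> int" and d :: nat
  assumes N: "wf_gnn N" "num_layers N = L"
  defines "N' \<equiv> N\<lparr>dims := dims N @ [d], layers := layers N @ [(C, A, b)]\<rparr>"
  shows "wf_gnn N'" "num_layers N' = Suc L" "dims N' ! Suc L = d" "state N' G L = state N G L"
    and "j < d \<Longrightarrow> state N' G (Suc L) u j = sig ((\<Sum>i<dims N ! L. state N G L u i * C i j
            + (\<Sum>v\<in>succs G u. state N G L v i) * A i j) + b j)"
proof -
  have lay: "length (layers N) = L" and dim: "length (dims N) = Suc L"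
    using N unfolding wf_gnn_def num_layers_def by auto
  show "wf_gnn N'" "num_layers N' = Suc L" "dims N' ! Suc L = d"
    using N lay dim unfolding wf_gnn_def num_layers_def N'_def by (auto simp: nth_append)
  show pre: "state N' G L = state N G L" for G
    by (rule state_eq_prefix) (auto simp: N'_def nth_append lay dim)
  show "j < d \<Longrightarrow> state N' G (Suc L) u j = sig ((\<Sum>i<dims N ! L. state N G L u i * C i j
            + (\<Sum>v\<in>succs G u. state N G L v i) * A i j) + b j)"
    using pre[unfolded N'_def] by (simp add: N'_def nth_append lay dim)
qed

lemma gnn_computes_Suc:
  assumes "gnn_computes L S" "finite T" "\<forall>g\<in>T. threshold_definable S g"
  shows "gnn_computes (Suc L) T"
proof -
  obtain N fs where N: "wf_gnn N" "num_layers N = L" "dims N ! L = length fs" "distinct fs" "S \<subseteq> set fs"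
    and feat: "\<And>G u i. wf_graph G \<Longrightarrow> i < length fs \<Longrightarrow> state N G L u i = of_bool ((fs ! i) G u)"
    using assms(1) unfolding gnn_computes_def by blast
  obtain gs where gs: "set gs = T" "distinct gs" using finite_distinct_list[OF assms(2)] by blast
  obtain c a b where thr: "\<And>g G u. g \<in> T \<Longrightarrow> wf_graph G \<Longrightarrow>
      g G u \<longleftrightarrow> 0 \<le> c g + (\<Sum>f\<in>S. a g f * of_bool (f G u) + b g f * succ_count G u f)"
  proof -
    have "\<forall>g\<in>T. \<exists>c a b. \<forall>G u. wf_graph G \<longrightarrow>
        (g G u \<longleftrightarrow> 0 \<le> c + (\<Sum>f\<in>S. a f * of_bool (f G u) + b f * succ_count G u f))"
      using assms(3) unfolding threshold_definable_def by blast
    then show thesis using that by (fastforce dest!: bchoice)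
  qed
  define C where "C k j = (if fs ! k \<in> S then a (gs ! j) (fs ! k) else 0)" for k j
  define A where "A k j = (if fs ! k \<in> S then b (gs ! j) (fs ! k) else 0)" for k j
  define N' where "N' = N\<lparr>dims := dims N @ [length gs], layers := layers N @ [(C, A, \<lambda>j. c (gs ! j) + 1)]\<rparr>"
  note N' = state_append_layer[OF N(1,2), where C = C and A = A and b = "\<lambda>j. c (gs ! j) + 1"
      and d = "length gs", folded N'_def]
  have "state N' G (Suc L) u j = of_bool ((gs ! j) G u)" if G: "wf_graph G" and j: "j < length gs" for G u j
  proof -
    let ?g = "gs ! j"
    have "(\<Sum>k<dims N ! L. state N G L u k * C k j + (\<Sum>v\<in>succs G u. state N G L v k) * A k j)
        = (\<Sum>k<length fs. if fs ! k \<in> S then a ?g (fs ! k) * of_bool ((fs ! k) G u)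
            + b ?g (fs ! k) * succ_count G u (fs ! k) else 0)"
      using N(3) by (intro sum.cong) (auto simp: feat G C_def A_def sum_of_bool_succs[OF G, symmetric])
    also have "\<dots> = (\<Sum>f\<in>S. a ?g f * of_bool (f G u) + b ?g f * succ_count G u f)"
      using N(4,5) by (rule sum_nth_restrict)
    finally have "state N' G (Suc L) u j
        = sig (c ?g + (\<Sum>f\<in>S. a ?g f * of_bool (f G u) + b ?g f * succ_count G u f) + 1)"
      using N'(5)[OF j] by (simp add: algebra_simps)
    also have "\<dots> = of_bool (?g G u)"
      using thr[OF nth_mem[OF j, unfolded gs(1)] G] by (simp add: sig_shift_eq_of_bool)
    finally show ?thesis .
  qed
  then show ?thesis
    unfolding gnn_computes_def using N'(1-3) gs by blast
qed

lemma threshold_definable_local: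
  fixes c :: int and a :: "'a node_pred \<Rightarrow> int"
  assumes "\<And>G u. wf_graph G \<Longrightarrow> g G u \<longleftrightarrow> 0 \<le> c + (\<Sum>f\<in>S. a f * of_bool (f G u))"
  shows "threshold_definable S g"
  unfolding threshold_definable_def using assms by (intro exI[of _ c] exI[of _ a] exI[of _ "\<lambda>_. 0 :: int"]) simp

lemma threshold_definable_member:
  assumes "finite S" "g \<in> S"
  shows "threshold_definable S g"
proof -
  define a where "a f = (if f = g then 1 else 0 :: int)" for f
  have "(\<Sum>f\<in>S. a f * of_bool (f G u)) = (\<Sum>f\<in>S. if f = g then of_bool (g G u) else 0)"
    for G u by (rule sum.cong) (auto simp: a_def)
  then show ?thesis
    using assms by (intro threshold_definable_local[where c = "-1" and a = a]) simp
qed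

lemma threshold_definable_exact_type:
  assumes "finite S" "A \<subseteq> S"
  shows "threshold_definable S (exact_type S A)"
proof -
  define a where "a f = (if f \<in> A then 1 else - 1 :: int)" for f
  have "exact_type S A G u \<longleftrightarrow> 0 \<le> - int (card A) + (\<Sum>f\<in>S. a f * of_bool (f G u))" for G u
  proof -
    have "- int (card A) + (\<Sum>f\<in>S. a f * of_bool (f G u)) = (\<Sum>f\<in>S. a f * of_bool (f G u) - of_bool (f \<in> A))"
      using assms by (simp add: sum_subtractf Int_absorb1)
    also have "\<dots> = - (\<Sum>f\<in>S. of_bool (f G u \<noteq> (f \<in> A)))"
      by (simp add: sum_negf[symmetric] a_def) (rule sum.cong; auto)
    also have "\<dots> = - int (card {f \<in> S. f G u \<noteq> (f \<in> A)})"
      using assms(1) by (simp add: Int_def)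
    finally have mismatches: "- int (card A) + (\<Sum>f\<in>S. a f * of_bool (f G u))
        = - int (card {f \<in> S. f G u \<noteq> (f \<in> A)})" .
    have "exact_type S A G u \<longleftrightarrow> {f \<in> S. f G u \<noteq> (f \<in> A)} = {}"
      unfolding exact_type_def by auto
    with mismatches show ?thesis
      using assms(1) by simp
  qed
  then show ?thesis by (rule threshold_definable_local)
qed

lemma exact_type_eq_of_holds:
  assumes "A \<subseteq> S" "exact_type S A G u"
  shows "A = {f \<in> S. f G u}"
  using assms unfolding exact_type_def by blast

lemma threshold_definable_over_types:
  assumes "finite S" "determined_by S g"
  shows "threshold_definable (exact_type S ` Pow S) g"
proof -
  let ?M = "exact_type S ` Pow S"
  define a where "a m = (of_bool (\<exists>G u. wf_graph G \<and> m G u \<and> g G u) :: int)" for m :: "'a node_pred"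
  show ?thesis
  proof (rule threshold_definable_local[where c = "-1" and a = a])
    fix G :: "'a graph" and u :: nat
    assume G: "wf_graph G"
    define m0 where "m0 = exact_type S {f \<in> S. f G u}"
    have m0: "m0 \<in> ?M" "m0 G u"
      unfolding m0_def by (blast intro: imageI) (simp add: exact_type_def)
    have "\<not> m G u" if m: "m \<in> ?M" "m \<noteq> m0" for m
    proof
      obtain A where A: "m = exact_type S A" "A \<subseteq> S" using m(1) by (elim imageE) (simp add: Pow_iff)
      assume "m G u"
      with A have "A = {f \<in> S. f G u}" by (simp add: exact_type_eq_of_holds)
      with A(1) m(2) show False by (simp add: m0_def)
    qed
    \<comment> \<open>every node has exactly one type, so the sum picks out the coefficient of that type\<close>
    then have "(\<Sum>m\<in>?M. a m * of_bool (m G u)) = (\<Sum>m\<in>?M. if m = m0 then a m0 else 0)"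
      using m0(2) by (intro sum.cong) auto
    also have "\<dots> = a m0" using assms(1) m0(1) by simp
    finally have sum_eq: "(\<Sum>m\<in>?M. a m * of_bool (m G u)) = a m0" .
    have agree: "g H w = g G u" if H: "wf_graph H" "m0 H w" for H w
    proof -
      have "\<forall>f\<in>S. f H w = f G u" using H(2) by (simp add: m0_def exact_type_def)
      then show ?thesis by (rule determined_byD[OF assms(2) H(1) G])
    qed
    have "(\<exists>H w. wf_graph H \<and> m0 H w \<and> g H w) \<longleftrightarrow> g G u"
      using agree G m0(2) by metis
    then have "a m0 = of_bool (g G u)"
      unfolding a_def by simp
    then have "g G u \<longleftrightarrow> 0 \<le> -1 + a m0" by simp
    then show "g G u \<longleftrightarrow> 0 \<le> -1 + (\<Sum>m\<in>?M. a m * of_bool (m G u))"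
      unfolding sum_eq .
  qed
qed

lemma gnn_computes_determined:
  assumes "gnn_computes L S" "finite S" "finite T" "\<forall>g\<in>T. determined_by S g"
  shows "gnn_computes (Suc (Suc L)) T"
proof (rule gnn_computes_Suc[OF gnn_computes_Suc[OF assms(1)] assms(3)])
  show "finite (exact_type S ` Pow S)" using assms(2) by simp
  show "\<forall>g\<in>exact_type S ` Pow S. threshold_definable S g"
    using assms(2) threshold_definable_exact_type by blast
  show "\<forall>g\<in>T. threshold_definable (exact_type S ` Pow S) g"
    using assms(2,4) threshold_definable_over_types by blast
qed

lemma gnn_computes_props:
  assumes "finite P"
  shows "gnn_computes 0 ((\<lambda>p G u. lab G u p) ` P)"
proof -
  obtain ps where ps: "set ps = P" "distinct ps" using finite_distinct_list[OF assms] by blast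
  define N :: "'a gnn" where "N = \<lparr>inputs = ps, dims = [length ps], layers = [], clsw = \<lambda>_. 0\<rparr>"
  define fs :: "'a node_pred list" where "fs = map (\<lambda>p G u. lab G u p) ps"
  have inj: "inj (\<lambda>p (G :: 'a graph) (u :: nat). lab G u p)"
  proof (rule injI)
    fix p q :: 'a
    assume "(\<lambda>G u. lab G u p) = (\<lambda>(G :: 'a graph) u. lab G u q)"
    then have "lab \<lparr>verts = {}, edges = {}, lab = \<lambda>_ x. x = p\<rparr> 0 p = lab \<lparr>verts = {}, edges = {}, lab = \<lambda>_ x. x = p\<rparr> 0 q"
      by metis
    then show "p = q" by simp
  qed
  have "distinct fs" using ps(2) inj_on_subset[OF inj subset_UNIV] by (simp add: fs_def distinct_map)
  moreover have "wf_gnn N" "num_layers N = 0" "dims N ! 0 = length fs"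
    unfolding N_def wf_gnn_def num_layers_def fs_def by simp_all
  moreover have "\<forall>G u i. wf_graph G \<longrightarrow> i < length fs \<longrightarrow> state N G 0 u i = of_bool ((fs ! i) G u)"
    unfolding N_def fs_def by simp
  moreover have "(\<lambda>p G u. lab G u p) ` P \<subseteq> set fs" unfolding fs_def using ps(1) by simp
  ultimately show ?thesis unfolding gnn_computes_def by blast
qed

lemma gnn_computes_classifier:
  assumes "gnn_computes L {g}"
  shows "\<exists>N :: 'a gnn. wf_gnn N \<and> num_layers N = L \<and> (\<forall>G u. wf_graph G \<longrightarrow> gnn_accepts N G u \<longleftrightarrow> g G u)"
proof -
  obtain N fs where N: "wf_gnn N" "num_layers N = L" "dims N ! L = length fs" "g \<in> set fs"
    and feat: "\<And>G u i. wf_graph G \<Longrightarrow> i < length fs \<Longrightarrow> state N G L u i = of_bool ((fs ! i) G u)"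
    using assms unfolding gnn_computes_def by blast
  obtain k where k: "k < length fs" "fs ! k = g" using N(4) by (auto simp: in_set_conv_nth)
  define N' where "N' = N\<lparr>clsw := \<lambda>i. of_bool (i = k)\<rparr>"
  have N': "wf_gnn N'" "num_layers N' = L"
    using N(1,2) unfolding N'_def wf_gnn_def num_layers_def by simp_all
  have N'_fields: "dims N' = dims N" "clsw N' = (\<lambda>i. of_bool (i = k))" by (simp_all add: N'_def)
  have same_state: "state N' G L = state N G L" for G
    by (rule state_eq_prefix[where T = L]) (simp_all add: N'_def)
  have "gnn_accepts N' G u \<longleftrightarrow> g G u" if G: "wf_graph G" for G u
  proof -
    have "(\<Sum>i<dims N' ! num_layers N'. clsw N' i * state N' G (num_layers N') u i)
        = (\<Sum>i<length fs. if i = k then state N G L u k else 0)"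
      using N(3) by (intro sum.cong) (auto simp: N'(2) N'_fields same_state)
    also have "\<dots> = of_bool (g G u)" using k feat[OF G k(1)] by simp
    finally show ?thesis unfolding gnn_accepts_def by simp
  qed
  with N' show ?thesis by blast
qed

definition sat_pred :: "'a fm \<Rightarrow> 'a node_pred" where
  "sat_pred \<phi> G u \<longleftrightarrow> sat G u \<phi>"

(* Propositions and counted formulas occurring outside the scope of every #: at a node they
  determine a formula together with the successor counts. *)
fun local_props_fm :: "'a fm \<Rightarrow> 'a set" and local_props_ex :: "'a ex \<Rightarrow> 'a set" where
  "local_props_fm (Prop p) = {p}"
| "local_props_fm (Neg \<phi>) = local_props_fm \<phi>"
| "local_props_fm (Or \<phi> \<psi>) = local_props_fm \<phi> \<union> local_props_fm \<psi>"
| "local_props_fm (Ge0 \<xi>) = local_props_ex \<xi>"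
| "local_props_ex (Const c) = {}"
| "local_props_ex (Ind \<phi>) = local_props_fm \<phi>"
| "local_props_ex (Count \<phi>) = {}"
| "local_props_ex (Plus \<xi> \<zeta>) = local_props_ex \<xi> \<union> local_props_ex \<zeta>"
| "local_props_ex (Times c \<xi>) = local_props_ex \<xi>"

fun counted_fm :: "'a fm \<Rightarrow> 'a fm set" and counted_ex :: "'a ex \<Rightarrow> 'a fm set" where
  "counted_fm (Prop p) = {}"
| "counted_fm (Neg \<phi>) = counted_fm \<phi>"
| "counted_fm (Or \<phi> \<psi>) = counted_fm \<phi> \<union> counted_fm \<psi>"
| "counted_fm (Ge0 \<xi>) = counted_ex \<xi>"
| "counted_ex (Const c) = {}"
| "counted_ex (Ind \<phi>) = counted_fm \<phi>"
| "counted_ex (Count \<phi>) = {\<phi>}"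
| "counted_ex (Plus \<xi> \<zeta>) = counted_ex \<xi> \<union> counted_ex \<zeta>"
| "counted_ex (Times c \<xi>) = counted_ex \<xi>"

fun count_coeff :: "'a ex \<Rightarrow> 'a fm \<Rightarrow> int" where
  "count_coeff (Const c) \<psi> = 0"
| "count_coeff (Ind \<phi>) \<psi> = 0"
| "count_coeff (Count \<phi>) \<psi> = of_bool (\<psi> = \<phi>)"
| "count_coeff (Plus \<xi> \<zeta>) \<psi> = count_coeff \<xi> \<psi> + count_coeff \<zeta> \<psi>"
| "count_coeff (Times c \<xi>) \<psi> = c * count_coeff \<xi> \<psi>"

fun eval_local :: "'a graph \<Rightarrow> nat \<Rightarrow> 'a ex \<Rightarrow> int" where
  "eval_local G u (Const c) = c"
| "eval_local G u (Ind \<phi>) = of_bool (sat G u \<phi>)"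
| "eval_local G u (Count \<phi>) = 0"
| "eval_local G u (Plus \<xi> \<zeta>) = eval_local G u \<xi> + eval_local G u \<zeta>"
| "eval_local G u (Times c \<xi>) = c * eval_local G u \<xi>"

fun local_bound :: "'a ex \<Rightarrow> int" where
  "local_bound (Const c) = \<bar>c\<bar>"
| "local_bound (Ind \<phi>) = 1"
| "local_bound (Count \<phi>) = 0"
| "local_bound (Plus \<xi> \<zeta>) = local_bound \<xi> + local_bound \<zeta>"
| "local_bound (Times c \<xi>) = \<bar>c\<bar> * local_bound \<xi>"

definition count_atom :: "'a ex \<Rightarrow> int \<Rightarrow> 'a node_pred" where
  "count_atom \<xi> r G u \<longleftrightarrow> 0 \<le> r + (\<Sum>\<psi>\<in>counted_ex \<xi>. count_coeff \<xi> \<psi> * succ_count G u (sat_pred \<psi>))"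

(* Since eval = eval_local + counting part and eval_local \<xi> ranges over
  [-local_bound \<xi>, local_bound \<xi>], the truth of \<xi> \<ge> 0 is decided by these finitely many atoms
  (together with the local propositions). *)
fun count_atoms_fm :: "'a fm \<Rightarrow> 'a node_pred set" and count_atoms_ex :: "'a ex \<Rightarrow> 'a node_pred set" where
  "count_atoms_fm (Prop p) = {}"
| "count_atoms_fm (Neg \<phi>) = count_atoms_fm \<phi>"
| "count_atoms_fm (Or \<phi> \<psi>) = count_atoms_fm \<phi> \<union> count_atoms_fm \<psi>"
| "count_atoms_fm (Ge0 \<xi>) = count_atoms_ex \<xi> \<union> count_atom \<xi> ` {- local_bound \<xi> .. local_bound \<xi>}"
| "count_atoms_ex (Const c) = {}"
| "count_atoms_ex (Ind \<phi>) = count_atoms_fm \<phi>"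
| "count_atoms_ex (Count \<phi>) = {}"
| "count_atoms_ex (Plus \<xi> \<zeta>) = count_atoms_ex \<xi> \<union> count_atoms_ex \<zeta>"
| "count_atoms_ex (Times c \<xi>) = count_atoms_ex \<xi>"

lemma sat_pred_Prop: "sat_pred (Prop p) = (\<lambda>G u. lab G u p)"
  by (simp add: fun_eq_iff sat_pred_def)

lemma finite_fm_components:
  fixes \<phi> :: "'a fm" and \<xi> :: "'a ex"
  shows "finite (local_props_fm \<phi>) \<and> finite (counted_fm \<phi>) \<and> finite (count_atoms_fm \<phi>)"
    and "finite (local_props_ex \<xi>) \<and> finite (counted_ex \<xi>) \<and> finite (count_atoms_ex \<xi>)"
  by (induct \<phi> and \<xi>) auto

lemma finite_counted_ex: "finite (counted_ex \<xi>)"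
  using finite_fm_components(2)[of \<xi>] by simp

lemma md_counted:
  fixes \<phi> :: "'a fm" and \<xi> :: "'a ex"
  shows "\<psi> \<in> counted_fm \<phi> \<Longrightarrow> md \<psi> < md \<phi>"
    and "\<psi> \<in> counted_ex \<xi> \<Longrightarrow> md \<psi> < mde \<xi>"
  by (induct \<phi> and \<xi>) auto

lemma eval_split:
  assumes "finite B" "counted_ex \<xi> \<subseteq> B"
  shows "eval G u \<xi> = eval_local G u \<xi> + (\<Sum>\<psi>\<in>B. count_coeff \<xi> \<psi> * succ_count G u (sat_pred \<psi>))"
  using assms(2)
proof (induction G u \<xi> rule: eval_local.induct)
  case (3 G u \<phi>)
  then show ?case
    using assms(1) by (simp add: sum.delta' succ_count_def sat_pred_def flip: of_bool_def)
next
  case (4 G u \<xi> \<zeta>)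
  then show ?case by (simp add: sum.distrib algebra_simps)
next
  case (5 G u c \<xi>)
  then show ?case by (simp add: sum_distrib_left algebra_simps)
qed auto

lemma abs_eval_local_le: "\<bar>eval_local G u \<xi>\<bar> \<le> local_bound \<xi>"
  by (induction G u \<xi> rule: eval_local.induct) (auto simp: abs_mult mult_left_mono intro: abs_triangle_ineq[THEN order_trans])

lemma count_atoms_counted:
  fixes \<phi> :: "'a fm" and \<zeta> :: "'a ex"
  shows "f \<in> count_atoms_fm \<phi> \<Longrightarrow> \<exists>\<xi> r. f = count_atom \<xi> r \<and> counted_ex \<xi> \<subseteq> counted_fm \<phi>"
    and "f \<in> count_atoms_ex \<zeta> \<Longrightarrow> \<exists>\<xi> r. f = count_atom \<xi> r \<and> counted_ex \<xi> \<subseteq> counted_ex \<zeta>"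
  by (induct \<phi> and \<zeta>) fastforce+

lemma sat_determined_by_count_atoms:
  fixes \<phi> :: "'a fm" and \<xi> :: "'a ex"
  shows "\<forall>p\<in>local_props_fm \<phi>. lab G u p = lab H w p \<Longrightarrow> \<forall>f\<in>count_atoms_fm \<phi>. f G u = f H w
      \<Longrightarrow> sat G u \<phi> = sat H w \<phi>"
    and "\<forall>p\<in>local_props_ex \<xi>. lab G u p = lab H w p \<Longrightarrow> \<forall>f\<in>count_atoms_ex \<xi>. f G u = f H w
      \<Longrightarrow> eval_local G u \<xi> = eval_local H w \<xi>"
proof (induct \<phi> and \<xi>)
  case (Ge0 \<xi>)
  define r where "r = eval_local G u \<xi>"
  have "r \<in> {- local_bound \<xi> .. local_bound \<xi>}"
    using abs_eval_local_le[of G u \<xi>] unfolding r_def by auto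
  then have "count_atom \<xi> r G u = count_atom \<xi> r H w" using Ge0.prems(2) by simp
  moreover have "eval_local H w \<xi> = r" using Ge0 r_def by simp
  moreover note split = eval_split[OF finite_counted_ex order_refl]
  ultimately show ?case
    using split[of G u] split[of H w] unfolding count_atom_def r_def by simp
qed simp_all

lemma threshold_definable_count_atom:
  assumes "finite S" "sat_pred ` counted_ex \<xi> \<subseteq> S"
  shows "threshold_definable S (count_atom \<xi> r)"
proof -
  define b where "b f = (\<Sum>\<psi>\<in>{\<psi> \<in> counted_ex \<xi>. sat_pred \<psi> = f}. count_coeff \<xi> \<psi>)" for f
  have "(\<Sum>f\<in>S. b f * succ_count G u f)
      = (\<Sum>\<psi>\<in>counted_ex \<xi>. count_coeff \<xi> \<psi> * succ_count G u (sat_pred \<psi>))" for G u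
  proof -
    have "(\<Sum>f\<in>S. b f * succ_count G u f) = (\<Sum>f\<in>sat_pred ` counted_ex \<xi>. b f * succ_count G u f)"
      by (rule sum.mono_neutral_right[OF assms]) (auto simp: b_def intro!: sum.neutral)
    also have "\<dots> = (\<Sum>\<psi>\<in>counted_ex \<xi>. count_coeff \<xi> \<psi> * succ_count G u (sat_pred \<psi>))"
      unfolding b_def sum.image_gen[OF finite_counted_ex, where g = sat_pred] by (simp add: sum_distrib_right)
    finally show ?thesis .
  qed
  then show ?thesis
    unfolding threshold_definable_def count_atom_def
    by (intro exI[of _ r] exI[of _ "\<lambda>_. 0 :: int"] exI[of _ b]) simp
qed

definition fm_support :: "'a fm set \<Rightarrow> 'a fm set" where
  "fm_support \<Phi> = (\<Union>\<phi>\<in>\<Phi>. counted_fm \<phi>) \<union> Prop ` (\<Union>\<phi>\<in>\<Phi>. local_props_fm \<phi>)"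

lemma finite_fm_support: "finite \<Phi> \<Longrightarrow> finite (fm_support \<Phi>)"
  unfolding fm_support_def using finite_fm_components(1) by blast

lemma md_fm_support_le:
  assumes "\<forall>\<phi>\<in>\<Phi>. md \<phi> \<le> Suc m" "\<psi> \<in> fm_support \<Phi>"
  shows "md \<psi> \<le> m"
  using assms md_counted(1) unfolding fm_support_def by fastforce

lemma fm_support_md_0:
  assumes "\<forall>\<phi>\<in>\<Phi>. md \<phi> = 0"
  shows "fm_support \<Phi> = Prop ` (\<Union>\<phi>\<in>\<Phi>. local_props_fm \<phi>)"
  using assms md_counted(1) unfolding fm_support_def by fastforce

lemma gnn_computes_next_depth:
  assumes "finite \<Phi>" "gnn_computes L (sat_pred ` fm_support \<Phi>)"
  shows "gnn_computes (L + 3) (sat_pred ` \<Phi>)"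
proof -
  define P where "P = (\<Union>\<phi>\<in>\<Phi>. local_props_fm \<phi>)"
  define T where "T = (\<Union>\<phi>\<in>\<Phi>. count_atoms_fm \<phi>) \<union> sat_pred ` Prop ` P"
  have fin_support: "finite (sat_pred ` fm_support \<Phi>)" using finite_fm_support[OF assms(1)] by simp
  have fin_T: "finite T" unfolding T_def P_def using assms(1) finite_fm_components(1) by blast
  have "\<forall>g\<in>T. threshold_definable (sat_pred ` fm_support \<Phi>) g"
  proof
    fix g assume "g \<in> T"
    then consider (atom) \<phi> where "\<phi> \<in> \<Phi>" "g \<in> count_atoms_fm \<phi>" | (propositional) "g \<in> sat_pred ` Prop ` P"
      unfolding T_def by blast
    then show "threshold_definable (sat_pred ` fm_support \<Phi>) g"
    proof cases
      case atom
      then obtain \<xi> r where "g = count_atom \<xi> r" "counted_ex \<xi> \<subseteq> counted_fm \<phi>"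
        using count_atoms_counted(1) by blast
      moreover have "counted_fm \<phi> \<subseteq> fm_support \<Phi>" using atom(1) unfolding fm_support_def by blast
      ultimately show ?thesis
        using threshold_definable_count_atom[OF fin_support] by (metis image_mono order_trans)
    next
      case propositional
      then have "g \<in> sat_pred ` fm_support \<Phi>" unfolding fm_support_def P_def by blast
      then show ?thesis by (rule threshold_definable_member[OF fin_support])
    qed
  qed
  then have "gnn_computes (Suc L) T" by (rule gnn_computes_Suc[OF assms(2) fin_T])
  moreover have "determined_by T (sat_pred \<phi>)" if "\<phi> \<in> \<Phi>" for \<phi>
    unfolding determined_by_def sat_pred_def
  proof (intro allI impI)
    fix G H :: "'a graph" and u w
    assume agree: "\<forall>f\<in>T. f G u = f H w"
    have "\<forall>p\<in>local_props_fm \<phi>. lab G u p = lab H w p"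
    proof
      fix p assume "p \<in> local_props_fm \<phi>"
      then have "sat_pred (Prop p) \<in> T" unfolding T_def P_def using that by blast
      from bspec[OF agree this] show "lab G u p = lab H w p" by (simp add: sat_pred_def)
    qed
    moreover have "\<forall>f\<in>count_atoms_fm \<phi>. f G u = f H w"
      using agree that unfolding T_def by blast
    ultimately show "sat G u \<phi> = sat H w \<phi>" by (rule sat_determined_by_count_atoms(1))
  qed
  ultimately have "gnn_computes (Suc (Suc (Suc L))) (sat_pred ` \<Phi>)"
    using gnn_computes_determined fin_T assms(1) by blast
  then show ?thesis by (simp add: numeral_3_eq_3)
qed

lemma gnn_computes_md:
  "finite \<Phi> \<Longrightarrow> \<forall>\<phi>\<in>\<Phi>. md \<phi> \<le> m \<Longrightarrow> gnn_computes (3 * m + 3) (sat_pred ` \<Phi>)"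
proof (induction m arbitrary: \<Phi>)
  case 0
  have "\<forall>\<phi>\<in>\<Phi>. md \<phi> = 0" using "0.prems"(2) by simp
  then have "sat_pred ` fm_support \<Phi> = (\<lambda>p G u. lab G u p) ` (\<Union>\<phi>\<in>\<Phi>. local_props_fm \<phi>)"
    by (simp add: fm_support_md_0 image_image sat_pred_Prop)
  moreover have "finite (\<Union>\<phi>\<in>\<Phi>. local_props_fm \<phi>)" using "0.prems"(1) finite_fm_components(1) by blast
  ultimately have "gnn_computes 0 (sat_pred ` fm_support \<Phi>)" using gnn_computes_props by simp
  then have "gnn_computes (0 + 3) (sat_pred ` \<Phi>)" by (rule gnn_computes_next_depth[OF "0.prems"(1)])
  then show ?case by simp
next
  case (Suc m)
  have "\<forall>\<psi>\<in>fm_support \<Phi>. md \<psi> \<le> m" using md_fm_support_le[OF Suc.prems(2)] by blast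
  with finite_fm_support[OF Suc.prems(1)]
  have "gnn_computes (3 * m + 3) (sat_pred ` fm_support \<Phi>)" by (rule Suc.IH)
  then have "gnn_computes (3 * m + 3 + 3) (sat_pred ` \<Phi>)" by (rule gnn_computes_next_depth[OF Suc.prems(1)])
  then show ?case by (simp add: algebra_simps)
qed

theorem mainTheorem3:
  "\<exists>c d :: nat. \<forall>\<phi> :: 'a fm. \<exists>N :: 'a gnn.
      wf_gnn N \<and> gnn_sem N = fm_sem \<phi> \<and> num_layers N \<le> c * md \<phi> + d"
proof (intro exI[of _ 3] allI)
  fix \<phi> :: "'a fm"
  have "gnn_computes (3 * md \<phi> + 3) {sat_pred \<phi>}"
    using gnn_computes_md[of "{\<phi>}" "md \<phi>"] by simp
  then obtain N :: "'a gnn" where "wf_gnn N" "num_layers N = 3 * md \<phi> + 3"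
    and "\<forall>G u. wf_graph G \<longrightarrow> gnn_accepts N G u \<longleftrightarrow> sat_pred \<phi> G u"
    using gnn_computes_classifier by blast
  then show "\<exists>N :: 'a gnn. wf_gnn N \<and> gnn_sem N = fm_sem \<phi> \<and> num_layers N \<le> 3 * md \<phi> + 3"
    by (auto simp: gnn_sem_def fm_sem_def pointed_graphs_def sat_pred_def)
qed

end
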